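(* Let $n$ be a non-negative integer and let $a,b$ be integers with $\gcd(a,b)=1$, $b\neq 0$ and $b\neq\pm1$. Let $C_k=\frac{1}{k+1}\binom{2k}{k}$ be the $k$-th Catalan number and let $M_N(a,b)=\sum_{k=0}^{\lfloor N/2\rfloor}\binom{N}{2k}C_k a^k b^{N-2k}$ be the generalized Motzkin number. Then $$\omega_b\big(M_{2n}(a,b)\big)=\omega_b(C_n),\qquad \omega_b\big(M_{2n+1}(a,b)\big)=1+\omega_b\big((2n+1)C_n\big).$$
   Context: For an integer $x$ with $x\neq 0,\pm1$ and a nonzero integer $y$, $\omega_x(y)$ denotes the largest non-negative integer $e$ such that $x^e$ divides $y$. *)

theory Defs
  imports Main
begin

text \<open>omega x y: the largest e with x^e dividing y (meaningful for x not in {0,1,-1}, y nonzero).\<close>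
definition omega :: "int \<Rightarrow> int \<Rightarrow> nat" where
  "omega x y = (GREATEST e. x ^ e dvd y)"

definition catalan :: "nat \<Rightarrow> int" where
  "catalan k = int ((2 * k) choose k) div int (k + 1)"

definition motzkin :: "nat \<Rightarrow> int \<Rightarrow> int \<Rightarrow> int" where
  "motzkin N a b = (\<Sum>k = 0..N div 2. int (N choose (2 * k)) * catalan k * a ^ k * b ^ (N - 2 * k))"

end

(* Write T_k = C(N,2k) C_k a^k b^(N-2k) for the terms of M_N. The top term k = n is C_n a^n
   when N = 2n and b (2n+1) C_n a^n when N = 2n+1; since a is prime to b its b-adic order is
   that of C_n, resp. one more than that of (2n+1) C_n. All lower terms have strictly larger
   order. For j = n - k >= 1 the identity
     C(2n,2k) C_k C(2j,j) = C_n C(n,k) C(n+1,k+1)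
   shows that b^e divides C(2n,2k) C_k C(2j,j), where e = omega_b(C_n). As C(2j,j) < 4^j, no
   prime power p^(2j) divides C(2j,j), so replacing C(2j,j) by b^(2j) gains a factor b and
   b^(e+1) divides T_k. The odd case is the same with (2j+1) C(2j,j) < 9^j, the prime 2 being
   harmless because 2j+1 is odd. *)

theory Submission
  imports Defs Complex_Main "HOL-Computational_Algebra.Primes"
begin

lemma omega_eqI:
  assumes "b ^ e dvd y" "\<not> b ^ Suc e dvd y"
  shows "omega b y = e"
  unfolding omega_def
proof (rule Greatest_equality)
  fix e' assume "b ^ e' dvd y"
  show "e' \<le> e"
  proof (rule ccontr)
    assume "\<not> e' \<le> e"
    then have "b ^ Suc e dvd b ^ e'" by (intro le_imp_power_dvd) simp
    with assms(2) \<open>b ^ e' dvd y\<close> show False using dvd_trans by blast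
  qed
qed fact

lemma omega_bounded:
  fixes b y :: int
  assumes "\<bar>b\<bar> \<ge> 2" "y \<noteq> 0" "b ^ e dvd y"
  shows "e < nat \<bar>y\<bar>"
proof -
  have "int e < 2 ^ e" by (metis less_exp of_nat_less_iff of_nat_numeral of_nat_power)
  also have "\<dots> \<le> \<bar>b\<bar> ^ e" using assms(1) by (intro power_mono) auto
  also have "\<dots> \<le> \<bar>y\<bar>" using dvd_imp_le_int[OF assms(2,3)] by (simp add: power_abs)
  finally show ?thesis by linarith
qed

lemma
  fixes b y :: int
  assumes "\<bar>b\<bar> \<ge> 2" "y \<noteq> 0"
  shows power_omega_dvd: "b ^ omega b y dvd y"
    and not_power_Suc_omega_dvd: "\<not> b ^ Suc (omega b y) dvd y"
proof -
  have bound: "e \<le> nat \<bar>y\<bar>" if "b ^ e dvd y" for e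
    using omega_bounded[OF assms that] by simp
  show "b ^ omega b y dvd y"
    unfolding omega_def by (rule GreatestI_nat[of _ 0]) (use bound in auto)
  show "\<not> b ^ Suc (omega b y) dvd y"
  proof
    assume "b ^ Suc (omega b y) dvd y"
    then have "Suc (omega b y) \<le> omega b y"
      unfolding omega_def by (rule Greatest_le_nat) (use bound in auto)
    then show False by simp
  qed
qed

lemma omega_dominant_add:
  fixes a b D R :: int
  assumes "\<bar>b\<bar> \<ge> 2" "coprime a b" "D \<noteq> 0" "b ^ Suc (omega b D) dvd R"
  shows "b ^ omega b D dvd D * a ^ n + R" "\<not> b ^ Suc (omega b D) dvd D * a ^ n + R"
proof -
  have "b ^ omega b D dvd R"
    using assms(4) by (rule dvd_trans[rotated]) (simp add: le_imp_power_dvd)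
  then show "b ^ omega b D dvd D * a ^ n + R"
    using power_omega_dvd[OF assms(1,3)] by simp
  have "coprime (b ^ Suc (omega b D)) (a ^ n)"
    using assms(2) by (simp add: coprime_commute)
  then show "\<not> b ^ Suc (omega b D) dvd D * a ^ n + R"
    using not_power_Suc_omega_dvd[OF assms(1,3)] assms(4)
    by (simp add: dvd_add_left_iff coprime_dvd_mult_left_iff)
qed

text \<open>At a prime \<open>p\<close> of \<open>b\<close> the factor \<open>Y\<close> has valuation below \<open>m\<close>, so trading it for
  \<open>b ^ m\<close> raises the valuation by at least \<open>v\<^sub>p(b)\<close>.\<close>

lemma power_dvd_mult_power_free_exchange:
  fixes b X Y :: "'a :: factorial_semiring"
  assumes "b \<noteq> 0" "Y \<noteq> 0" "b ^ e dvd X * Y"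
    and power_free: "\<And>p. prime p \<Longrightarrow> \<not> p ^ m dvd Y"
  shows "b ^ Suc e dvd X * b ^ m"
proof (cases "X = 0")
  case False
  show ?thesis
  proof (rule multiplicity_le_imp_dvd)
    show "b ^ Suc e \<noteq> 0" using assms(1) by simp
    fix p :: 'a assume p: "prime p"
    define v x y where "v = multiplicity p b" "x = multiplicity p X" "y = multiplicity p Y"
    have "multiplicity p (b ^ e) \<le> multiplicity p (X * Y)"
      using assms(3) False assms(2) by (intro dvd_imp_multiplicity_le) auto
    then have "e * v \<le> x + y"
      using p assms(1,2) False
      by (simp add: v_x_y_def prime_elem_multiplicity_mult_distrib
          prime_elem_multiplicity_power_distrib)
    moreover have "y < m"
      using power_free[OF p] multiplicity_dvd'[of m p Y] by (force simp: v_x_y_def)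
    ultimately have "Suc e * v \<le> x + m * v"
    proof (cases v)
      case (Suc w)
      have "w \<le> m * w" using \<open>y < m\<close> by simp
      moreover have "Suc e * v = e * v + w + 1" "m * v = m + m * w" by (simp_all add: Suc)
      ultimately show ?thesis using \<open>e * v \<le> x + y\<close> \<open>y < m\<close> by linarith
    qed simp
    then show "multiplicity p (b ^ Suc e) \<le> multiplicity p (X * b ^ m)"
      using p assms(1) False
      by (simp add: v_x_y_def prime_elem_multiplicity_mult_distrib
          prime_elem_multiplicity_power_distrib)
  qed
qed simp

lemma central_binomial_less_four_power:
  assumes "0 < j"
  shows "(2 * j choose j) < 4 ^ j"
proof -
  have "(\<Sum>i\<in>{0, j}. 2 * j choose i) \<le> (\<Sum>i\<le>2 * j. 2 * j choose i)"
    by (intro sum_mono2) auto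
  also have "\<dots> = 4 ^ j"
    by (simp add: choose_row_sum power_mult)
  finally show ?thesis
    using assms by simp
qed

lemma odd_times_central_binomial_less_nine_power:
  assumes "0 < j"
  shows "(2 * j + 1) * (2 * j choose j) < 9 ^ j"
proof (cases "j = 1")
  case False
  with assms have "2 \<le> j" by simp
  have "(2 * j + 1) * (2 * j choose j) < (2 * j + 1) * 4 ^ j"
    using central_binomial_less_four_power[OF assms] by (intro mult_strict_left_mono) auto
  also have "\<dots> \<le> 9 ^ j"
    using \<open>2 \<le> j\<close>
  proof (induction j rule: dec_induct)
    case (step i)
    have "(2 * Suc i + 1) * 4 ^ Suc i \<le> 9 * ((2 * i + 1) * 4 ^ i)"
      using step.hyps by (simp add: algebra_simps)
    also have "\<dots> \<le> 9 ^ Suc i"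
      using step.IH by simp
    finally show ?case .
  qed simp
  finally show ?thesis .
qed (simp add: numeral_2_eq_2)

lemma prime_power_not_dvd_central_binomial:
  fixes p :: int
  assumes "0 < j" "prime p"
  shows "\<not> p ^ (2 * j) dvd int (2 * j choose j)"
proof (rule zdvd_not_zless)
  have "int (2 * j choose j) < 4 ^ j"
    using central_binomial_less_four_power[OF assms(1)]
    by (metis of_nat_less_iff of_nat_numeral of_nat_power)
  also have "(4::int) ^ j \<le> (p ^ 2) ^ j"
    using power_mono[OF prime_ge_2_int[OF assms(2)], of 2] by (intro power_mono) auto
  also have "\<dots> = p ^ (2 * j)"
    by (simp add: power_mult)
  finally show "int (2 * j choose j) < p ^ (2 * j)" .
qed simp

lemma prime_power_not_dvd_odd_times_central_binomial:
  fixes p :: int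
  assumes "0 < j" "prime p"
  shows "\<not> p ^ (2 * j) dvd int ((2 * j + 1) * (2 * j choose j))"
proof (cases "p = 2")
  case True
  have "coprime (p ^ (2 * j)) (int (2 * j + 1))"
    by (simp add: True)
  then show ?thesis
    using prime_power_not_dvd_central_binomial[OF assms]
    by (simp only: of_nat_mult coprime_dvd_mult_right_iff simp_thms)
next
  case False
  show ?thesis
  proof (rule zdvd_not_zless)
    have "int ((2 * j + 1) * (2 * j choose j)) < 9 ^ j"
      using odd_times_central_binomial_less_nine_power[OF assms(1)]
      by (metis of_nat_less_iff of_nat_numeral of_nat_power)
    also have "(9::int) ^ j \<le> (p ^ 2) ^ j"
      using prime_ge_2_int[OF assms(2)] False power_mono[of 3 p 2] by (intro power_mono) auto
    also have "\<dots> = p ^ (2 * j)"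
      by (simp add: power_mult)
    finally show "int ((2 * j + 1) * (2 * j choose j)) < p ^ (2 * j)" .
  qed (simp only: of_nat_0_less_iff, simp)
qed

lemma catalan_times_Suc: "catalan k * int (Suc k) = int (2 * k choose k)"
proof -
  have "coprime (Suc k) (Suc (2 * k))"
    by (metis add_Suc add_Suc_right coprime_Suc_left_nat coprime_mult_left_iff mult.commute mult_2_right)
  moreover have "Suc k dvd Suc (2 * k) * (2 * k choose k)"
    using Suc_times_binomial_eq[of "2 * k" k] by (metis dvd_triv_right)
  ultimately have "Suc k dvd (2 * k choose k)"
    by (metis coprime_dvd_mult_right_iff)
  then have "int (Suc k) dvd int (2 * k choose k)"
    by (simp only: of_nat_dvd_iff)
  then show ?thesis unfolding catalan_def by simp
qed

lemma catalan_nonzero: "catalan k \<noteq> 0"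
  using catalan_times_Suc[of k] by auto

lemma of_int_catalan: "real_of_int (catalan k) = fact (2 * k) / (fact k * fact (Suc k))"
proof -
  have "real_of_int (catalan k) * real (Suc k) = real (2 * k choose k)"
    by (metis catalan_times_Suc of_int_mult of_int_of_nat_eq)
  also have "\<dots> = fact (2 * k) / (fact k * fact k)"
    by (simp add: binomial_fact)
  finally show ?thesis
    by (simp add: field_simps del: of_nat_Suc)
qed

lemma catalan_binomial_identity:
  "int (2 * (k + j) choose (2 * k)) * catalan k * int (2 * j choose j)
     = catalan (k + j) * int ((k + j) choose k) * int (Suc (k + j) choose Suc k)"
proof -
  have binomials:
    "real (2 * (k + j) choose (2 * k)) = fact (2 * (k + j)) / (fact (2 * k) * fact (2 * j))"
    "real (2 * j choose j) = fact (2 * j) / (fact j * fact j)"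
    "real ((k + j) choose k) = fact (k + j) / (fact k * fact j)"
    "real (Suc (k + j) choose Suc k) = fact (Suc (k + j)) / (fact (Suc k) * fact j)"
    by (simp_all add: binomial_fact del: binomial_Suc_Suc)
  have "real (2 * (k + j) choose (2 * k)) * real_of_int (catalan k) * real (2 * j choose j)
      = real_of_int (catalan (k + j)) * real ((k + j) choose k) * real (Suc (k + j) choose Suc k)"
    unfolding binomials of_int_catalan by (simp add: field_simps del: fact_Suc)
  then show ?thesis
    by (metis (no_types, opaque_lifting) of_int_eq_iff of_int_mult of_int_of_nat_eq)
qed

lemma catalan_binomial_identity_odd:
  "int (2 * (k + j) + 1 choose (2 * k)) * catalan k * int ((2 * j + 1) * (2 * j choose j))
     = int (2 * (k + j) + 1) * catalan (k + j)
       * int ((k + j) choose k) * int (Suc (k + j) choose Suc k)"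
proof -
  have "(2 * j + 1) * (2 * (k + j) + 1 choose (2 * k))
      = (2 * (k + j) + 1) * (2 * (k + j) choose (2 * k))"
    using binomial_absorb_comp[of "2 * (k + j) + 1" "2 * k"] by (simp add: Suc_diff_le)
  then have absorb: "int (2 * j + 1) * int (2 * (k + j) + 1 choose (2 * k))
      = int (2 * (k + j) + 1) * int (2 * (k + j) choose (2 * k))"
    by (metis of_nat_mult)
  have "int (2 * (k + j) + 1 choose (2 * k)) * catalan k * int ((2 * j + 1) * (2 * j choose j))
      = (int (2 * j + 1) * int (2 * (k + j) + 1 choose (2 * k))) * catalan k * int (2 * j choose j)"
    by (simp only: of_nat_mult ac_simps)
  also have "\<dots> = int (2 * (k + j) + 1)
      * (int (2 * (k + j) choose (2 * k)) * catalan k * int (2 * j choose j))"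
    unfolding absorb by (simp only: ac_simps)
  finally show ?thesis
    unfolding catalan_binomial_identity by (simp only: ac_simps)
qed

lemma motzkin_even_eq:
  "motzkin (2 * n) a b
     = catalan n * a ^ n
       + (\<Sum>k<n. int (2 * n choose (2 * k)) * catalan k * a ^ k * b ^ (2 * n - 2 * k))"
  unfolding motzkin_def by (simp add: atLeast0AtMost lessThan_Suc_atMost[symmetric])

lemma motzkin_odd_eq:
  "motzkin (2 * n + 1) a b
     = b * (int (2 * n + 1) * catalan n * a ^ n
            + (\<Sum>k<n. int (2 * n + 1 choose (2 * k)) * catalan k * a ^ k * b ^ (2 * n - 2 * k)))"
proof -
  have "motzkin (2 * n + 1) a b
      = (\<Sum>k<Suc n.
           b * (int (2 * n + 1 choose (2 * k)) * catalan k * a ^ k * b ^ (2 * n - 2 * k)))"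
    unfolding motzkin_def atLeast0AtMost lessThan_Suc_atMost
    by (intro sum.cong) (auto simp: Suc_diff_le mult_ac)
  then show ?thesis
    by (simp add: sum_distrib_left algebra_simps)
qed

lemma power_Suc_omega_catalan_dvd_motzkin_term:
  fixes a b :: int
  assumes "\<bar>b\<bar> \<ge> 2" "k < n"
  shows "b ^ Suc (omega b (catalan n))
           dvd int (2 * n choose (2 * k)) * catalan k * a ^ k * b ^ (2 * n - 2 * k)"
proof -
  obtain j where n: "n = k + j" and "0 < j"
    using assms(2) less_imp_add_positive by blast
  have factor_dvd:
    "b ^ omega b (catalan n) dvd int (2 * n choose (2 * k)) * catalan k * int (2 * j choose j)"
    using power_omega_dvd[OF assms(1) catalan_nonzero]
    unfolding n catalan_binomial_identity by (simp add: mult.assoc)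
  have "b ^ Suc (omega b (catalan n)) dvd int (2 * n choose (2 * k)) * catalan k * b ^ (2 * j)"
  proof (rule power_dvd_mult_power_free_exchange[OF _ _ factor_dvd])
    show "int (2 * j choose j) \<noteq> 0"
      by simp
  qed (use assms(1) prime_power_not_dvd_central_binomial[OF \<open>0 < j\<close>] in auto)
  then have "b ^ Suc (omega b (catalan n))
      dvd int (2 * n choose (2 * k)) * catalan k * b ^ (2 * j) * a ^ k"
    by (rule dvd_mult2)
  then show ?thesis
    by (simp add: n mult_ac)
qed

lemma power_Suc_omega_catalan_dvd_motzkin_term_odd:
  fixes a b :: int
  assumes "\<bar>b\<bar> \<ge> 2" "k < n"
  shows "b ^ Suc (omega b (int (2 * n + 1) * catalan n))
           dvd int (2 * n + 1 choose (2 * k)) * catalan k * a ^ k * b ^ (2 * n - 2 * k)"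
proof -
  obtain j where n: "n = k + j" and "0 < j"
    using assms(2) less_imp_add_positive by blast
  have nonzero: "int (2 * n + 1) * catalan n \<noteq> 0"
    using catalan_nonzero by simp
  have factor_dvd: "b ^ omega b (int (2 * n + 1) * catalan n)
      dvd int (2 * n + 1 choose (2 * k)) * catalan k * int ((2 * j + 1) * (2 * j choose j))"
    using power_omega_dvd[OF assms(1) nonzero]
    unfolding n catalan_binomial_identity_odd by (metis dvd_mult2)
  have "b ^ Suc (omega b (int (2 * n + 1) * catalan n))
      dvd int (2 * n + 1 choose (2 * k)) * catalan k * b ^ (2 * j)"
  proof (rule power_dvd_mult_power_free_exchange[OF _ _ factor_dvd])
    show "int ((2 * j + 1) * (2 * j choose j)) \<noteq> 0"
      by (simp only: of_nat_eq_0_iff) simp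
  qed (use assms(1) prime_power_not_dvd_odd_times_central_binomial[OF \<open>0 < j\<close>] in auto)
  then have "b ^ Suc (omega b (int (2 * n + 1) * catalan n))
      dvd int (2 * n + 1 choose (2 * k)) * catalan k * b ^ (2 * j) * a ^ k"
    by (rule dvd_mult2)
  then show ?thesis
    by (simp add: n mult_ac)
qed

theorem theorem9:
  fixes n :: nat and a b :: int
  assumes "gcd a b = 1" and "b \<noteq> 0" and "b \<noteq> 1" and "b \<noteq> -1"
  shows "omega b (motzkin (2 * n) a b) = omega b (catalan n)
       \<and> omega b (motzkin (2 * n + 1) a b) = 1 + omega b (int (2 * n + 1) * catalan n)"
proof -
  have b: "\<bar>b\<bar> \<ge> 2" using assms(2-4) by linarith
  have ab: "coprime a b" using assms(1) by (simp add: coprime_iff_gcd_eq_1)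
  have "b ^ Suc (omega b (catalan n))
      dvd (\<Sum>k<n. int (2 * n choose (2 * k)) * catalan k * a ^ k * b ^ (2 * n - 2 * k))"
    by (intro dvd_sum power_Suc_omega_catalan_dvd_motzkin_term[OF b]) simp
  from omega_dominant_add[OF b ab catalan_nonzero this]
  have even: "omega b (motzkin (2 * n) a b) = omega b (catalan n)"
    unfolding motzkin_even_eq by (rule omega_eqI)
  define D where "D = int (2 * n + 1) * catalan n"
  have "D \<noteq> 0"
    using catalan_nonzero by (simp add: D_def)
  have "b ^ Suc (omega b D)
      dvd (\<Sum>k<n. int (2 * n + 1 choose (2 * k)) * catalan k * a ^ k * b ^ (2 * n - 2 * k))"
    unfolding D_def by (intro dvd_sum power_Suc_omega_catalan_dvd_motzkin_term_odd[OF b]) simp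
  from omega_dominant_add[OF b ab \<open>D \<noteq> 0\<close> this]
  have odd: "omega b (motzkin (2 * n + 1) a b) = Suc (omega b D)"
    unfolding motzkin_odd_eq D_def[symmetric] using assms(2) by (intro omega_eqI) simp_all
  show ?thesis
    using even odd by (simp add: D_def)
qed

end
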